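(* For $l,m,n,u,v\in\mathbb{N}$, \[ \sum_{k=-\infty}^\infty (-1)^k\binom{l+m}{l+k}\binom{m+n}{m+k}\binom{n+l}{n+k}\binom{2u}{u+k} =\frac{(2u)!}{u!}\sum_{k=0}^{\infty} \frac{(l+m+n-k)!}{k!\,(l-k)!\,(m-k)!\,(n-k)!\,(u+k)!}, \] and \[ \sum_{k=-\infty}^\infty (-1)^k\binom{m+n}{m+k}\binom{m+n}{n+k}\binom{u+v}{u+k}\binom{u+v}{v+k} =\binom{u+v}{u}\sum_{k=0}^{\infty} \frac{(m+n)!\,(u+v+k)!}{k!\,(m-k)!\,(n-k)!\,(u+k)!\,(v+k)!}. \]
   Context: Convention: $1/j!=0$ for negative integers $j$, and binomial coefficients $\binom{a}{b}$ with $b<0$ or $b>a$ are $0$. *)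

theory Defs
  imports "HOL-Analysis.Analysis"
begin

definition binomz :: "nat \<Rightarrow> int \<Rightarrow> real" where
  "binomz a b = (if b < 0 then 0 else real (a choose nat b))"

definition inv_fact :: "int \<Rightarrow> real" where
  "inv_fact j = (if j < 0 then 0 else 1 / fact (nat j))"

end

theory Submission
  imports Defs
begin

(* Since binomz (a + b) (a + k) = (a + b)! / ((a + k)! (b - k)!), both left-hand sides are
   alternating sums (alt_sum) over k of products of the functions
   phi_a(k) = 1 / ((a + k)! (a - k)!) (inv_fact_pm a k).
   Vandermonde's convolution linearizes a product of two of them,
     phi_a phi_b = (sum_j phi_j / ((a - j)! (b - j)!)) / (a + b)!,
   and sum_k (-1)^k phi_j(k) vanishes unless j = 0. Linearizing once more gives Dixon's
   identity for three factors. The first identity follows by linearizing twice and resumming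
   with Vandermonde, the second by one linearization followed by Dixon's identity. *)

lemma inv_fact_of_nat [simp]: "inv_fact (int n) = 1 / fact n"
  by (simp add: inv_fact_def)

lemma inv_fact_of_nat_add [simp]: "inv_fact (int a + int b) = 1 / fact (a + b)"
  by (metis inv_fact_of_nat of_nat_add)

lemma inv_fact_diff: "b \<le> a \<Longrightarrow> inv_fact (int a - int b) = 1 / fact (a - b)"
  by (simp add: of_nat_diff[symmetric] del: of_nat_diff)

lemma inv_fact_diff_eq_0: "a < b \<Longrightarrow> inv_fact (int a - int b) = 0"
  by (simp add: inv_fact_def)

lemma binomz_eq_fact:
  "binomz (a + b) (int a + k) = fact (a + b) * inv_fact (int a + k) * inv_fact (int b - k)"
proof (cases "0 \<le> int a + k \<and> int a + k \<le> int (a + b)")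
  case True
  then obtain t where t: "int a + k = int t" "t \<le> a + b"
    by (metis nonneg_int_cases of_nat_le_iff)
  then have "int b - k = int (a + b - t)"
    by linarith
  then have "inv_fact (int b - k) = 1 / fact (a + b - t)"
    by simp
  then show ?thesis
    using t by (simp add: binomz_def binomial_fact)
next
  case False
  then show ?thesis
    by (auto simp: binomz_def inv_fact_def)
qed

lemma sum_inv_fact_vandermonde_0:
  "(\<Sum>j\<le>b. inv_fact (int a - int j) * inv_fact (int b - int j) / (fact j * fact (d + j)))
   = fact (a + b + d) / (fact a * fact b * fact (a + d) * fact (b + d))"
proof -
  have "(\<Sum>j\<le>b. inv_fact (int a - int j) * inv_fact (int b - int j) / (fact j * fact (d + j)))
      = (\<Sum>j\<le>b. real (a choose j) * real ((b + d) choose (b - j))) / (fact a * fact (b + d))"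
    unfolding sum_divide_distrib
  proof (intro sum.cong refl)
    fix j assume j: "j \<in> {..b}"
    show "inv_fact (int a - int j) * inv_fact (int b - int j) / (fact j * fact (d + j))
        = real (a choose j) * real ((b + d) choose (b - j)) / (fact a * fact (b + d))"
    proof (cases "j \<le> a")
      case True
      have "b + d - (b - j) = d + j"
        using j by auto
      then show ?thesis
        using True j by (simp add: inv_fact_diff binomial_fact field_simps)
    next
      case False
      then show ?thesis
        by (simp add: inv_fact_diff_eq_0)
    qed
  qed
  also have "\<dots> = real ((a + b + d) choose b) / (fact a * fact (b + d))"
    using arg_cong[where f = real, OF vandermonde[of a "b + d" b]] by (simp add: add.assoc)
  also have "\<dots> = fact (a + b + d) / (fact a * fact b * fact (a + d) * fact (b + d))"
  proof -
    have "a + b + d - b = a + d"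
      by simp
    then show ?thesis
      by (simp add: binomial_fact field_simps)
  qed
  finally show ?thesis .
qed

lemma sum_inv_fact_vandermonde:
  "(\<Sum>j\<le>b. inv_fact (int a - int j) * inv_fact (int b - int j) * inv_fact (int j - int i)
      / fact (d + j))
   = fact (a + b + d - i) * inv_fact (int a - int i) * inv_fact (int b - int i)
      / (fact (a + d) * fact (b + d))"
proof (cases "i \<le> a \<and> i \<le> b")
  case False
  have "inv_fact (int a - int j) * inv_fact (int b - int j) * inv_fact (int j - int i)
      / fact (d + j) = 0" for j
    using False by (cases "j < i") (auto simp: inv_fact_diff_eq_0)
  moreover have "inv_fact (int a - int i) * inv_fact (int b - int i) = 0"
    using False by (auto simp: inv_fact_diff_eq_0 not_le)
  ultimately show ?thesis
    by (simp only: sum.neutral_const) simp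
next
  case True
  let ?f = "\<lambda>j. inv_fact (int a - int j) * inv_fact (int b - int j) * inv_fact (int j - int i)
      / fact (d + j)"
  have "(\<Sum>j\<le>b. ?f j) = (\<Sum>j\<in>{i..b}. ?f j)"
    by (intro sum.mono_neutral_right) (auto simp: inv_fact_diff_eq_0)
  also have "\<dots> = (\<Sum>s\<le>b - i. ?f (i + s))"
    using sum.atLeastAtMost_shift_0[of i b ?f] True by (simp add: atLeast0AtMost)
  also have "\<dots> = (\<Sum>s\<le>b - i. inv_fact (int (a - i) - int s) * inv_fact (int (b - i) - int s)
      / (fact s * fact (d + i + s)))"
  proof (intro sum.cong refl)
    fix s
    have "inv_fact (int a - int (i + s)) = inv_fact (int (a - i) - int s)"
      "inv_fact (int b - int (i + s)) = inv_fact (int (b - i) - int s)"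
      using True by (simp_all add: of_nat_diff algebra_simps)
    then show "?f (i + s) = inv_fact (int (a - i) - int s) * inv_fact (int (b - i) - int s)
        / (fact s * fact (d + i + s))"
      by (simp only:) (simp add: add.assoc)
  qed
  also have "\<dots> = fact (a + b + d - i) * inv_fact (int a - int i) * inv_fact (int b - int i)
      / (fact (a + d) * fact (b + d))"
  proof -
    have "a - i + (b - i) + (d + i) = a + b + d - i" "a - i + (d + i) = a + d"
      "b - i + (d + i) = b + d"
      using True by auto
    then show ?thesis
      unfolding sum_inv_fact_vandermonde_0 using True by (simp add: inv_fact_diff)
  qed
  finally show ?thesis .
qed

definition inv_fact_pm :: "nat \<Rightarrow> int \<Rightarrow> real" where
  "inv_fact_pm a k = inv_fact (int a + k) * inv_fact (int a - k)"

lemma inv_fact_pm_abs: "inv_fact_pm a \<bar>k\<bar> = inv_fact_pm a k"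
  by (simp add: inv_fact_pm_def abs_if mult.commute)

lemma inv_fact_pm_eq_0: "int a < \<bar>k\<bar> \<Longrightarrow> inv_fact_pm a k = 0"
  by (cases "k < 0") (auto simp: inv_fact_pm_def inv_fact_def)

lemma binomz_central: "binomz (2 * a) (int a + k) = fact (2 * a) * inv_fact_pm a k"
  using binomz_eq_fact[of a a k] by (simp add: inv_fact_pm_def mult_2 mult.assoc)

lemma inv_fact_pm_mult:
  "inv_fact_pm a k * inv_fact_pm b k
   = (\<Sum>j\<le>b. inv_fact_pm j k * inv_fact (int a - int j) * inv_fact (int b - int j)) / fact (a + b)"
proof -
  obtain i where i: "\<bar>k\<bar> = int i"
    using nonneg_int_cases[OF abs_ge_zero] by metis
  have pm: "inv_fact_pm c k = inv_fact (int c + int i) * inv_fact (int c - int i)" for c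
    using inv_fact_pm_abs[of c k] by (simp add: i inv_fact_pm_def)
  have "(\<Sum>j\<le>b. inv_fact_pm j k * inv_fact (int a - int j) * inv_fact (int b - int j))
      = (\<Sum>j\<le>b. inv_fact (int a - int j) * inv_fact (int b - int j) * inv_fact (int j - int i)
          / fact (i + j))"
    by (simp add: pm add.commute mult_ac)
  also have "\<dots> = fact (a + b) * inv_fact_pm a k * inv_fact_pm b k"
    unfolding sum_inv_fact_vandermonde by (simp add: pm add.commute)
  finally show ?thesis
    by simp
qed

definition alt_sum :: "(int \<Rightarrow> real) \<Rightarrow> real" where
  "alt_sum f = (\<Sum>\<^sub>\<infinity>k. (-1) powi k * f k)"

lemma alt_sum_eq_sum:
  assumes "\<And>k. int N < \<bar>k\<bar> \<Longrightarrow> f k = 0"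
  shows "alt_sum f = (\<Sum>k\<in>{-int N..int N}. (-1) powi k * f k)"
proof -
  have "(\<Sum>\<^sub>\<infinity>k. (-1) powi k * f k) = (\<Sum>\<^sub>\<infinity>k\<in>{-int N..int N}. (-1) powi k * f k)"
    by (rule infsum_cong_neutral) (auto simp: assms)
  then show ?thesis
    by (simp add: alt_sum_def)
qed

lemma infsum_eq_sum_atMost:
  fixes f :: "nat \<Rightarrow> real"
  assumes "\<And>k. N < k \<Longrightarrow> f k = 0"
  shows "(\<Sum>\<^sub>\<infinity>k. f k) = (\<Sum>k\<le>N. f k)"
proof -
  have "(\<Sum>\<^sub>\<infinity>k. f k) = (\<Sum>\<^sub>\<infinity>k\<in>{..N}. f k)"
    by (rule infsum_cong_neutral) (auto simp: assms)
  then show ?thesis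
    by simp
qed

lemma alt_sum_inv_fact_pm: "alt_sum (inv_fact_pm j) = (if j = 0 then 1 else 0)"
proof -
  have "alt_sum (inv_fact_pm j) = (\<Sum>k\<in>{-int j..int j}. (-1) powi k * inv_fact_pm j k)"
    by (rule alt_sum_eq_sum) (simp add: inv_fact_pm_eq_0)
  also have "\<dots> = (\<Sum>i\<le>2 * j. (-1) powi (int i - int j) * inv_fact_pm j (int i - int j))"
  proof (rule sum.reindex_bij_witness[where i = "\<lambda>i. int i - int j" and j = "\<lambda>k. nat (k + int j)"])
    fix k :: int assume "k \<in> {-int j..int j}"
    then show "int (nat (k + int j)) - int j = k" "nat (k + int j) \<in> {..2 * j}"
      by auto
  next
    fix i assume "i \<in> {..2 * j}"
    then show "nat (int i - int j + int j) = i" "int i - int j \<in> {-int j..int j}"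
      by auto
  qed simp
  also have "\<dots> = (-1) ^ j / fact (2 * j) * (\<Sum>i\<le>2 * j. (-1) ^ i * real ((2 * j) choose i))"
    unfolding sum_distrib_left
  proof (intro sum.cong refl)
    fix i assume i: "i \<in> {..2 * j}"
    have "int j + (int i - int j) = int i" "int j - (int i - int j) = int (2 * j - i)"
      using i by auto
    then have "inv_fact_pm j (int i - int j) = 1 / (fact i * fact (2 * j - i))"
      by (simp only: inv_fact_pm_def inv_fact_of_nat) simp
    moreover have "(-1::real) powi (int i - int j) = (-1) ^ i * (-1) ^ j"
      by (cases "even j") (auto simp: power_int_diff)
    ultimately show "(-1) powi (int i - int j) * inv_fact_pm j (int i - int j)
        = (-1) ^ j / fact (2 * j) * ((-1) ^ i * real ((2 * j) choose i))"
      using i by (simp add: binomial_fact)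
  qed
  also have "\<dots> = (if j = 0 then 1 else 0)"
    using choose_alternating_sum[of "2 * j", where 'a = real] by auto
  finally show ?thesis .
qed

lemma alt_sum_linearize:
  "alt_sum (\<lambda>k. inv_fact_pm a k * inv_fact_pm b k * h k)
   = (\<Sum>j\<le>b. inv_fact (int a - int j) * inv_fact (int b - int j)
        * alt_sum (\<lambda>k. inv_fact_pm j k * h k)) / fact (a + b)"
proof -
  let ?W = "{-int b..int b}"
  let ?c = "\<lambda>j. inv_fact (int a - int j) * inv_fact (int b - int j) / fact (a + b)"
  have "alt_sum (\<lambda>k. inv_fact_pm a k * inv_fact_pm b k * h k)
      = (\<Sum>k\<in>?W. (-1) powi k * (inv_fact_pm a k * inv_fact_pm b k * h k))"
    by (rule alt_sum_eq_sum) (simp add: inv_fact_pm_eq_0)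
  also have "\<dots> = (\<Sum>k\<in>?W. \<Sum>j\<le>b. ?c j * ((-1) powi k * (inv_fact_pm j k * h k)))"
    by (simp add: inv_fact_pm_mult sum_distrib_left sum_distrib_right sum_divide_distrib mult_ac)
  also have "\<dots> = (\<Sum>j\<le>b. ?c j * (\<Sum>k\<in>?W. (-1) powi k * (inv_fact_pm j k * h k)))"
    by (simp add: sum.swap[of _ ?W] sum_distrib_left)
  also have "\<dots> = (\<Sum>j\<le>b. ?c j * alt_sum (\<lambda>k. inv_fact_pm j k * h k))"
  proof (intro sum.cong refl arg_cong[where f = "(*) _"])
    fix j assume "j \<in> {..b}"
    then show "(\<Sum>k\<in>?W. (-1) powi k * (inv_fact_pm j k * h k)) = alt_sum (\<lambda>k. inv_fact_pm j k * h k)"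
      by (intro alt_sum_eq_sum[symmetric]) (simp add: inv_fact_pm_eq_0)
  qed
  finally show ?thesis
    by (simp add: sum_divide_distrib)
qed

lemma alt_sum_inv_fact_pm_mult:
  "alt_sum (\<lambda>k. inv_fact_pm a k * inv_fact_pm b k) = 1 / (fact a * fact b * fact (a + b))"
  using alt_sum_linearize[of a b "\<lambda>_. 1"]
  by (simp add: alt_sum_inv_fact_pm if_distrib sum.delta cong: if_cong)

theorem dixon_alt_sum:
  "alt_sum (\<lambda>k. inv_fact_pm a k * inv_fact_pm b k * inv_fact_pm c k)
   = fact (a + b + c) / (fact a * fact b * fact c * fact (a + b) * fact (b + c) * fact (c + a))"
proof -
  have "alt_sum (\<lambda>k. inv_fact_pm a k * inv_fact_pm b k * inv_fact_pm c k)
      = (\<Sum>j\<le>b. inv_fact (int a - int j) * inv_fact (int b - int j) / (fact j * fact (c + j)))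
        / (fact (a + b) * fact c)"
    unfolding alt_sum_linearize alt_sum_inv_fact_pm_mult
    by (simp add: sum_divide_distrib add.commute mult_ac)
  also have "\<dots> = fact (a + b + c) / (fact a * fact b * fact c * fact (a + b) * fact (b + c) * fact (c + a))"
    using sum_inv_fact_vandermonde[of a b 0 c] by (simp add: add.commute mult_ac)
  finally show ?thesis .
qed

lemma alt_sum_inv_fact_pm_four:
  "alt_sum (\<lambda>k. inv_fact_pm l k * inv_fact_pm m k * inv_fact_pm n k * inv_fact_pm u k)
   = (\<Sum>i\<le>n. fact (l + m + n - i) * inv_fact (int l - int i) * inv_fact (int m - int i)
        * inv_fact (int n - int i) / (fact i * fact (u + i)))
     / (fact u * fact (l + m) * fact (m + n) * fact (n + l))"
proof -
  let ?c = "\<lambda>i. inv_fact (int n - int i) / (fact i * fact (u + i))"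
  \<comment> \<open>Dixon's sum kept unevaluated, so that the outer sum over j can be done first\<close>
  have triple: "alt_sum (\<lambda>k. inv_fact_pm j k * inv_fact_pm n k * inv_fact_pm u k)
      = (\<Sum>i\<le>n. inv_fact (int j - int i) * ?c i) / (fact u * fact (j + n))" for j
    unfolding alt_sum_linearize alt_sum_inv_fact_pm_mult
    by (simp add: sum_divide_distrib add.commute mult_ac)
  have "alt_sum (\<lambda>k. inv_fact_pm l k * inv_fact_pm m k * inv_fact_pm n k * inv_fact_pm u k)
      = (\<Sum>j\<le>m. inv_fact (int l - int j) * inv_fact (int m - int j)
          * alt_sum (\<lambda>k. inv_fact_pm j k * inv_fact_pm n k * inv_fact_pm u k)) / fact (l + m)"
    using alt_sum_linearize[of l m "\<lambda>k. inv_fact_pm n k * inv_fact_pm u k"] by (simp add: mult.assoc)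
  also have "\<dots> = (\<Sum>j\<le>m. \<Sum>i\<le>n. ?c i * (inv_fact (int l - int j) * inv_fact (int m - int j)
          * inv_fact (int j - int i) / fact (n + j))) / (fact u * fact (l + m))"
    unfolding triple by (simp add: sum_distrib_left sum_divide_distrib add.commute mult_ac)
  also have "\<dots> = (\<Sum>i\<le>n. ?c i * (\<Sum>j\<le>m. inv_fact (int l - int j) * inv_fact (int m - int j)
          * inv_fact (int j - int i) / fact (n + j))) / (fact u * fact (l + m))"
    by (simp add: sum.swap[of _ "{..m}"] sum_distrib_left)
  also have "\<dots> = (\<Sum>i\<le>n. fact (l + m + n - i) * inv_fact (int l - int i) * inv_fact (int m - int i)
        * inv_fact (int n - int i) / (fact i * fact (u + i)))
     / (fact u * fact (l + m) * fact (m + n) * fact (n + l))"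
    unfolding sum_inv_fact_vandermonde by (simp add: sum_divide_distrib add.commute mult_ac)
  finally show ?thesis .
qed

lemma four_binomial_sum_cyclic:
  fixes l m n u :: nat
  shows "(\<Sum>\<^sub>\<infinity>k::int. (-1::real) powi k * binomz (l+m) (int l + k) * binomz (m+n) (int m + k)
            * binomz (n+l) (int n + k) * binomz (2*u) (int u + k))
         = fact (2*u) / fact u *
           (\<Sum>\<^sub>\<infinity>k::nat. fact (nat (int (l+m+n) - int k)) * inv_fact (int k) * inv_fact (int l - int k)
              * inv_fact (int m - int k) * inv_fact (int n - int k) * inv_fact (int u + int k))"
proof -
  have summand: "(-1) powi k * binomz (l+m) (int l + k) * binomz (m+n) (int m + k)
        * binomz (n+l) (int n + k) * binomz (2*u) (int u + k)
      = fact (l + m) * fact (m + n) * fact (n + l) * fact (2 * u)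
        * ((-1) powi k * (inv_fact_pm l k * inv_fact_pm m k * inv_fact_pm n k * inv_fact_pm u k))"
    for k
    unfolding binomz_eq_fact binomz_central by (simp add: inv_fact_pm_def mult_ac)
  have rhs: "(\<Sum>\<^sub>\<infinity>k::nat. fact (nat (int (l+m+n) - int k)) * inv_fact (int k) * inv_fact (int l - int k)
        * inv_fact (int m - int k) * inv_fact (int n - int k) * inv_fact (int u + int k))
      = (\<Sum>i\<le>n. fact (l + m + n - i) * inv_fact (int l - int i) * inv_fact (int m - int i)
        * inv_fact (int n - int i) / (fact i * fact (u + i)))"
    by (subst infsum_eq_sum_atMost[of n])
      (auto simp: inv_fact_diff_eq_0 nat_diff_distrib' simp del: of_nat_add intro!: sum.cong)
  show ?thesis
    unfolding summand infsum_cmult_right' alt_sum_def[symmetric] alt_sum_inv_fact_pm_four rhs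
    by simp
qed

lemma four_binomial_sum_paired:
  fixes m n u v :: nat
  shows "(\<Sum>\<^sub>\<infinity>k::int. (-1::real) powi k * binomz (m+n) (int m + k) * binomz (m+n) (int n + k)
            * binomz (u+v) (int u + k) * binomz (u+v) (int v + k))
         = real ((u+v) choose u) *
           (\<Sum>\<^sub>\<infinity>k::nat. fact (m+n) * fact (u+v+k) * inv_fact (int k) * inv_fact (int m - int k)
              * inv_fact (int n - int k) * inv_fact (int u + int k) * inv_fact (int v + int k))"
proof -
  have summand: "(-1) powi k * binomz (m+n) (int m + k) * binomz (m+n) (int n + k)
        * binomz (u+v) (int u + k) * binomz (u+v) (int v + k)
      = fact (m + n) ^ 2 * fact (u + v) ^ 2
        * ((-1) powi k * (inv_fact_pm m k * inv_fact_pm n k * inv_fact_pm u k * inv_fact_pm v k))"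
    for k
    unfolding binomz_eq_fact binomz_eq_fact[of n m, unfolded add.commute[of n m]]
      binomz_eq_fact[of v u, unfolded add.commute[of v u]]
    by (simp add: inv_fact_pm_def power2_eq_square mult_ac)
  have "alt_sum (\<lambda>k. inv_fact_pm m k * inv_fact_pm n k * inv_fact_pm u k * inv_fact_pm v k)
      = (\<Sum>j\<le>n. inv_fact (int m - int j) * inv_fact (int n - int j) * fact (j + u + v)
          / (fact j * fact u * fact v * fact (j + u) * fact (u + v) * fact (v + j))) / fact (m + n)"
    using alt_sum_linearize[of m n "\<lambda>k. inv_fact_pm u k * inv_fact_pm v k"]
    by (simp add: mult.assoc dixon_alt_sum[unfolded mult.assoc])
  moreover have "(\<Sum>\<^sub>\<infinity>k::nat. fact (m+n) * fact (u+v+k) * inv_fact (int k) * inv_fact (int m - int k)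
        * inv_fact (int n - int k) * inv_fact (int u + int k) * inv_fact (int v + int k))
      = (\<Sum>j\<le>n. fact (m + n) * fact (u + v + j) * inv_fact (int m - int j) * inv_fact (int n - int j)
          / (fact j * fact (u + j) * fact (v + j)))"
    by (subst infsum_eq_sum_atMost[of n]) (auto simp: inv_fact_diff_eq_0)
  ultimately show ?thesis
    unfolding summand infsum_cmult_right' alt_sum_def[symmetric]
    by (simp add: binomial_fact sum_distrib_left sum_divide_distrib power2_eq_square add_ac mult_ac)
qed

theorem corollary5p9:
  fixes l m n u v :: nat
  shows "((\<Sum>\<^sub>\<infinity>k::int. (-1::real) powi k * binomz (l+m) (int l + k) * binomz (m+n) (int m + k)
            * binomz (n+l) (int n + k) * binomz (2*u) (int u + k))
         = fact (2*u) / fact u *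
           (\<Sum>\<^sub>\<infinity>k::nat. fact (nat (int (l+m+n) - int k)) * inv_fact (int k) * inv_fact (int l - int k)
              * inv_fact (int m - int k) * inv_fact (int n - int k) * inv_fact (int u + int k)))
    \<and> ((\<Sum>\<^sub>\<infinity>k::int. (-1::real) powi k * binomz (m+n) (int m + k) * binomz (m+n) (int n + k)
            * binomz (u+v) (int u + k) * binomz (u+v) (int v + k))
         = real ((u+v) choose u) *
           (\<Sum>\<^sub>\<infinity>k::nat. fact (m+n) * fact (u+v+k) * inv_fact (int k) * inv_fact (int m - int k)
              * inv_fact (int n - int k) * inv_fact (int u + int k) * inv_fact (int v + int k)))"
  using four_binomial_sum_cyclic four_binomial_sum_paired by blast

end
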